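(* Let $h_1\subsetneq h_2^*$ be strongly separated half-spaces. Then for $i=1,2$ the set $h_i\cap B(h_1,h_2)$ consists of a single vertex $x_i$, and $B(h_1,h_2)=\mathcal I(x_1,x_2)$. Moreover the half-spaces separating points of $B(h_1,h_2)$ are exactly those $h$ with $h_1\subseteq h\subseteq h_2^*$ or $h_1\subseteq h^*\subseteq h_2^*$.
   Context: $X$ is a finite-dimensional CAT(0) cube complex identified with its vertex set, $\mathfrak H$ its set of half-spaces, $h^*=X\setminus h$, $U_v=\{h:v\in h\}$. Transverse ($\pitchfork$): $h\cap k,h\cap k^*,h^*\cap k,h^*\cap k^*$ all nonempty; strongly separated: no half-space transverse to both. Write $\hat a\subset b$ if $a\subsetneq b$ or $a^*\subsetneq b$. For $h_1\subsetneq h_2^*$, $\beta(h_1,h_2)$ is the set of $h$ with ($\hat h_1\subset h$ and $h\pitchfork h_2$) or ($\hat h_2\subset h$ and $h\pitchfork h_1$) or ($\hat h_1\subset h$ and $\hat h_2\subset h$); the bridge is $B(h_1,h_2)=\{x\in X: x\in h\ \forall h\in\beta(h_1,h_2)\}$. For vertices $v,w$, $\mathcal I(v,w)=\{m\in X:U_v\cap U_w\subset U_m\}$. *)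

theory Defs
  imports Main
begin

text \<open>A CAT(0) cube complex is modelled by its 1-skeleton, which is a median graph
  (Chepoi / Roller / Gerasimov).  Vertices form a set V, edges a symmetric irreflexive
  relation E on V.\<close>

definition walk :: "('a \<Rightarrow> 'a \<Rightarrow> bool) \<Rightarrow> 'a \<Rightarrow> 'a \<Rightarrow> nat \<Rightarrow> bool" where
  "walk E u v n \<longleftrightarrow> (\<exists>p::nat \<Rightarrow> 'a. p 0 = u \<and> p n = v \<and> (\<forall>i<n. E (p i) (p (Suc i))))"

definition gdist :: "('a \<Rightarrow> 'a \<Rightarrow> bool) \<Rightarrow> 'a \<Rightarrow> 'a \<Rightarrow> nat" where
  "gdist E u v = (LEAST n. walk E u v n)"

definition ginterval :: "('a \<Rightarrow> 'a \<Rightarrow> bool) \<Rightarrow> 'a set \<Rightarrow> 'a \<Rightarrow> 'a \<Rightarrow> 'a set" where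
  "ginterval E V u v = {m \<in> V. gdist E u m + gdist E m v = gdist E u v}"

definition median_graph :: "'a set \<Rightarrow> ('a \<Rightarrow> 'a \<Rightarrow> bool) \<Rightarrow> bool" where
  "median_graph V E \<longleftrightarrow>
     (\<forall>u v. E u v \<longrightarrow> u \<in> V \<and> v \<in> V) \<and>
     (\<forall>u v. E u v \<longrightarrow> E v u) \<and> (\<forall>u. \<not> E u u) \<and>
     (\<forall>u\<in>V. \<forall>v\<in>V. \<exists>n. walk E u v n) \<and>
     (\<forall>u\<in>V. \<forall>v\<in>V. \<forall>w\<in>V. \<exists>!m.
        m \<in> ginterval E V u v \<and> m \<in> ginterval E V v w \<and> m \<in> ginterval E V u w)"

definition halfspaces :: "'a set \<Rightarrow> ('a \<Rightarrow> 'a \<Rightarrow> bool) \<Rightarrow> 'a set set" where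
  "halfspaces V E = {{x \<in> V. gdist E x u < gdist E x v} | u v. u \<in> V \<and> v \<in> V \<and> E u v}"

definition transverse :: "'a set \<Rightarrow> 'a set \<Rightarrow> 'a set \<Rightarrow> bool" where
  "transverse V h k \<longleftrightarrow> h \<inter> k \<noteq> {} \<and> h \<inter> (V - k) \<noteq> {} \<and>
                           (V - h) \<inter> k \<noteq> {} \<and> (V - h) \<inter> (V - k) \<noteq> {}"

definition finite_dim :: "'a set \<Rightarrow> ('a \<Rightarrow> 'a \<Rightarrow> bool) \<Rightarrow> bool" where
  "finite_dim V E \<longleftrightarrow> (\<exists>n::nat. \<forall>F \<subseteq> halfspaces V E.
      (\<forall>h\<in>F. \<forall>k\<in>F. h \<noteq> k \<longrightarrow> transverse V h k) \<longrightarrow> finite F \<and> card F \<le> n)"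

definition strongly_separated :: "'a set \<Rightarrow> ('a \<Rightarrow> 'a \<Rightarrow> bool) \<Rightarrow> 'a set \<Rightarrow> 'a set \<Rightarrow> bool" where
  "strongly_separated V E h k \<longleftrightarrow>
     \<not> (\<exists>l \<in> halfspaces V E. transverse V l h \<and> transverse V l k)"

definition hatsub :: "'a set \<Rightarrow> 'a set \<Rightarrow> 'a set \<Rightarrow> bool" where
  "hatsub V a b \<longleftrightarrow> a \<subset> b \<or> (V - a) \<subset> b"

definition bridge_set :: "'a set \<Rightarrow> ('a \<Rightarrow> 'a \<Rightarrow> bool) \<Rightarrow> 'a set \<Rightarrow> 'a set \<Rightarrow> 'a set set" where
  "bridge_set V E h1 h2 = {h \<in> halfspaces V E.
      (hatsub V h1 h \<and> transverse V h h2) \<or> (hatsub V h2 h \<and> transverse V h h1) \<or>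
      (hatsub V h1 h \<and> hatsub V h2 h)}"

definition bridge :: "'a set \<Rightarrow> ('a \<Rightarrow> 'a \<Rightarrow> bool) \<Rightarrow> 'a set \<Rightarrow> 'a set \<Rightarrow> 'a set" where
  "bridge V E h1 h2 = {x \<in> V. \<forall>h \<in> bridge_set V E h1 h2. x \<in> h}"

definition Uhs :: "'a set \<Rightarrow> ('a \<Rightarrow> 'a \<Rightarrow> bool) \<Rightarrow> 'a \<Rightarrow> 'a set set" where
  "Uhs V E v = {h \<in> halfspaces V E. v \<in> h}"

definition hinterval :: "'a set \<Rightarrow> ('a \<Rightarrow> 'a \<Rightarrow> bool) \<Rightarrow> 'a \<Rightarrow> 'a \<Rightarrow> 'a set" where
  "hinterval V E v w = {m \<in> V. Uhs V E v \<inter> Uhs V E w \<subseteq> Uhs V E m}"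

end

theory Submission
  imports Defs
begin

text \<open>Choose \<open>x\<^sub>1 \<in> h\<^sub>1\<close>, \<open>x\<^sub>2 \<in> h\<^sub>2\<close> at minimal distance. A median triangle argument shows
  that a half-space containing \<open>x\<^sub>1\<close> but not \<open>x\<^sub>2\<close> contains all of \<open>h\<^sub>1\<close> and misses \<open>h\<^sub>2\<close>;
  so the half-spaces separating \<open>x\<^sub>1\<close> from \<open>x\<^sub>2\<close> are exactly those nested between \<open>h\<^sub>1\<close> and
  \<open>h\<^sub>2\<^sup>*\<close>. Conversely a half-space containing both points meets both sides of \<open>h\<^sub>1\<close> and of
  \<open>h\<^sub>2\<close>, so it contains one of their sides properly or is transverse to it, and strong
  separation forbids being transverse to both: these are precisely the half-spaces of
  \<open>\<beta>(h\<^sub>1, h\<^sub>2)\<close>. Hence \<open>B(h\<^sub>1, h\<^sub>2) = \<I>(x\<^sub>1, x\<^sub>2)\<close>, and the remaining claims are read off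
  from the separation behaviour of \<open>x\<^sub>1\<close> and \<open>x\<^sub>2\<close>.\<close>

lemma walk_0_iff [simp]: "walk E u v 0 \<longleftrightarrow> u = v"
  unfolding walk_def by auto

lemma walk_edge: "E u v \<Longrightarrow> walk E u v 1"
  unfolding walk_def by (rule exI[of _ "\<lambda>i. if i = 0 then u else v"]) auto

lemma walk_append:
  assumes "walk E u v m" and "walk E v w n"
  shows "walk E u w (m + n)"
proof -
  obtain p where p: "p 0 = u" "p m = v" "\<forall>i<m. E (p i) (p (Suc i))"
    using assms(1) unfolding walk_def by blast
  obtain q where q: "q 0 = v" "q n = w" "\<forall>i<n. E (q i) (q (Suc i))"
    using assms(2) unfolding walk_def by blast
  define r where "r i = (if i \<le> m then p i else q (i - m))" for i
  have "E (r i) (r (Suc i))" if "i < m + n" for i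
  proof (cases "i < m")
    case True
    then show ?thesis using p by (auto simp: r_def)
  next
    case False
    then have "i - m < n" "Suc i - m = Suc (i - m)" using that by auto
    then show ?thesis using p q False by (cases "i = m") (auto simp: r_def)
  qed
  moreover have "r 0 = u" "r (m + n) = w" using p q by (auto simp: r_def)
  ultimately show ?thesis unfolding walk_def by blast
qed

lemma walk_reverse:
  assumes sym: "\<And>a b. E a b \<Longrightarrow> E b a" and "walk E u v n"
  shows "walk E v u n"
proof -
  obtain p where p: "p 0 = u" "p n = v" "\<forall>i<n. E (p i) (p (Suc i))"
    using assms(2) unfolding walk_def by blast
  have "E (p (n - i)) (p (n - Suc i))" if "i < n" for i
    using p(3)[rule_format, of "n - Suc i"] that sym by (simp add: Suc_diff_Suc)
  moreover have "p (n - 0) = v" "p (n - n) = u" using p by auto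
  ultimately show ?thesis unfolding walk_def by (intro exI[of _ "\<lambda>i. p (n - i)"]) auto
qed

lemma walk_SucD:
  assumes "walk E u v (Suc n)"
  shows "\<exists>w. E u w \<and> walk E w v n"
proof -
  obtain p where p: "p 0 = u" "p (Suc n) = v" "\<forall>i<Suc n. E (p i) (p (Suc i))"
    using assms unfolding walk_def by blast
  then have "walk E (p 1) v n" unfolding walk_def by (intro exI[of _ "\<lambda>i. p (Suc i)"]) auto
  moreover have "E u (p 1)" using p by auto
  ultimately show ?thesis by blast
qed

lemma hatsub_or_transverse:
  assumes "h \<subseteq> V" "k \<subseteq> V" and meets: "h \<inter> k \<noteq> {}" "h \<inter> (V - k) \<noteq> {}"
  shows "hatsub V k h \<or> transverse V h k"
proof (cases "(V - h) \<inter> k = {} \<or> (V - h) \<inter> (V - k) = {}")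
  case True
  then have "k \<subset> h \<or> V - k \<subset> h" using assms by blast
  then show ?thesis unfolding hatsub_def ..
next
  case False
  then show ?thesis using meets unfolding transverse_def by blast
qed

lemma obtain_closest_pair:
  fixes f :: "'a \<Rightarrow> 'b \<Rightarrow> nat"
  assumes "A \<noteq> {}" "B \<noteq> {}"
  obtains a b where "a \<in> A" "b \<in> B" "\<And>x y. x \<in> A \<Longrightarrow> y \<in> B \<Longrightarrow> f a b \<le> f x y"
proof -
  define P where "P q \<longleftrightarrow> fst q \<in> A \<and> snd q \<in> B" for q :: "'a \<times> 'b"
  obtain x y where "x \<in> A" "y \<in> B" using assms by blast
  then have "P (x, y)" unfolding P_def by simp
  then obtain p where p: "P p" "\<forall>q. P q \<longrightarrow> f (fst p) (snd p) \<le> f (fst q) (snd q)"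
    using ex_has_least_nat[of P "(x, y)" "\<lambda>q. f (fst q) (snd q)"] by blast
  show thesis
  proof (rule that)
    show "fst p \<in> A" "snd p \<in> B" using p(1) unfolding P_def by auto
    show "f (fst p) (snd p) \<le> f x' y'" if "x' \<in> A" "y' \<in> B" for x' y'
      using p(2)[rule_format, of "(x', y')"] that unfolding P_def by simp
  qed
qed

lemma bridge_set_subset: "bridge_set V E h1 h2 \<subseteq> halfspaces V E"
  unfolding bridge_set_def by blast

lemma hinterval_commute: "hinterval V E x y = hinterval V E y x"
  unfolding hinterval_def by blast

locale median =
  fixes V :: "'a set" and E :: "'a \<Rightarrow> 'a \<Rightarrow> bool"
  assumes median_graph: "median_graph V E"
begin

abbreviation d :: "'a \<Rightarrow> 'a \<Rightarrow> nat" where "d \<equiv> gdist E"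

lemma edge_in_V: "E u v \<Longrightarrow> u \<in> V \<and> v \<in> V"
  using median_graph unfolding median_graph_def by blast

lemma edge_sym: "E u v \<Longrightarrow> E v u"
  using median_graph unfolding median_graph_def by blast

lemma edge_irrefl: "\<not> E u u"
  using median_graph unfolding median_graph_def by blast

lemma median_unique: "u \<in> V \<Longrightarrow> v \<in> V \<Longrightarrow> w \<in> V \<Longrightarrow>
    \<exists>!m. m \<in> ginterval E V u v \<and> m \<in> ginterval E V v w \<and> m \<in> ginterval E V u w"
  using median_graph unfolding median_graph_def by blast

lemma walk_gdist: "u \<in> V \<Longrightarrow> v \<in> V \<Longrightarrow> walk E u v (d u v)"
  using median_graph unfolding median_graph_def gdist_def by (metis LeastI_ex)

lemma gdist_le_walk: "walk E u v n \<Longrightarrow> d u v \<le> n"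
  unfolding gdist_def by (rule Least_le)

lemma gdist_self [simp]: "d u u = 0"
  using gdist_le_walk[of u u 0] by simp

lemma gdist_eq_0_iff: "u \<in> V \<Longrightarrow> v \<in> V \<Longrightarrow> d u v = 0 \<longleftrightarrow> u = v"
  using walk_gdist[of u v] by auto

lemma gdist_commute:
  assumes "u \<in> V" "v \<in> V"
  shows "d u v = d v u"
  using gdist_le_walk[OF walk_reverse[OF edge_sym walk_gdist[OF assms]]]
    gdist_le_walk[OF walk_reverse[OF edge_sym walk_gdist[OF assms(2,1)]]] by simp

lemma gdist_triangle: "u \<in> V \<Longrightarrow> v \<in> V \<Longrightarrow> w \<in> V \<Longrightarrow> d u w \<le> d u v + d v w"
  using gdist_le_walk[OF walk_append[OF walk_gdist walk_gdist]] by blast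

lemma gdist_edge:
  assumes "E u v"
  shows "d u v = 1"
proof -
  have "d u v \<le> 1" using gdist_le_walk walk_edge[of E, OF assms] by blast
  moreover have "d u v \<noteq> 0" using gdist_eq_0_iff edge_in_V[OF assms] edge_irrefl assms by blast
  ultimately show ?thesis by linarith
qed

lemma edge_if_gdist_1: "u \<in> V \<Longrightarrow> v \<in> V \<Longrightarrow> d u v = 1 \<Longrightarrow> E u v"
  using walk_SucD[of E u v 0] walk_gdist[of u v] by auto

lemma gdist_step:
  assumes "u \<in> V" and "v \<in> V" and "u \<noteq> v"
  obtains w where "E u w" and "d w v + 1 = d u v"
proof -
  obtain n where n: "d u v = Suc n"
    using assms gdist_eq_0_iff by (cases "d u v") auto
  then obtain w where w: "E u w" "walk E w v n"
    using walk_SucD walk_gdist assms by metis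
  have "d u v \<le> d u w + d w v" using gdist_triangle assms edge_in_V w by blast
  then have "d w v + 1 = d u v" using gdist_le_walk[OF w(2)] gdist_edge[OF w(1)] n by linarith
  then show thesis using that w(1) by blast
qed

text \<open>Median graphs are bipartite: the median of \<open>z, u, v\<close> would have to be \<open>u\<close> or \<open>v\<close>,
  which forces \<open>d z u \<noteq> d z v\<close>.\<close>
lemma gdist_edge_neq:
  assumes e: "E u v" and z: "z \<in> V"
  shows "d z u \<noteq> d z v"
proof
  assume eq: "d z u = d z v"
  have uv: "u \<in> V" "v \<in> V" using edge_in_V e by auto
  obtain m where m: "m \<in> ginterval E V z u" "m \<in> ginterval E V u v" "m \<in> ginterval E V z v"
    using median_unique[OF z uv] by blast
  have "d u m + d m v = 1" "m \<in> V" using m(2) gdist_edge[OF e] unfolding ginterval_def by auto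
  then have "d u m = 0 \<or> d m v = 0" by arith
  then have "m = u \<or> m = v" using gdist_eq_0_iff uv \<open>m \<in> V\<close> by blast
  then show False
    using m eq gdist_edge[OF e] gdist_edge[OF edge_sym[OF e]] unfolding ginterval_def by auto
qed

lemma gdist_edge_cases:
  assumes e: "E u v" and z: "z \<in> V"
  shows "d z v = d z u + 1 \<or> d z u = d z v + 1"
proof -
  have uv: "u \<in> V" "v \<in> V" using edge_in_V e by auto
  have "d z v \<le> d z u + d u v" "d z u \<le> d z v + d v u" using gdist_triangle z uv by auto
  then show ?thesis using gdist_edge_neq[OF e z] gdist_edge[OF e] gdist_edge[OF edge_sym[OF e]] by arith
qed

definition W :: "'a \<Rightarrow> 'a \<Rightarrow> 'a set" where
  "W u v = {x \<in> V. d x u < d x v}"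

lemma halfspaces_eq_W: "halfspaces V E = {W u v | u v. E u v}"
  unfolding halfspaces_def W_def using edge_in_V by blast

lemma W_subset_V: "W u v \<subseteq> V"
  unfolding W_def by auto

lemma Diff_W: "E u v \<Longrightarrow> V - W u v = W v u"
  unfolding W_def using gdist_edge_neq by fastforce

text \<open>A vertex of \<open>W u v\<close> outside \<open>W u' v'\<close> would make both \<open>u\<close> and \<open>v'\<close> medians of
  \<open>v, u', z\<close>.\<close>
lemma W_subset_opposite_edge:
  assumes e: "E u v" "E v v'" "E v' u'" "E u' u" and ne: "u \<noteq> v'" "v \<noteq> u'"
  shows "W u v \<subseteq> W u' v'"
proof
  fix z assume "z \<in> W u v"
  then have z: "z \<in> V" "d z u < d z v" unfolding W_def by auto
  have V: "u \<in> V" "v \<in> V" "u' \<in> V" "v' \<in> V" using edge_in_V e by auto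
  show "z \<in> W u' v'"
  proof (rule ccontr)
    assume "z \<notin> W u' v'"
    then have "d z v' < d z u'" using gdist_edge_neq[OF e(3) z(1)] z unfolding W_def by auto
    then have dz: "d z v = d z u + 1" "d z u' = d z u + 1" "d z v' = d z u"
      using gdist_edge_cases[OF e(1) z(1)] gdist_edge_cases[OF e(2) z(1)]
        gdist_edge_cases[OF e(3) z(1)] gdist_edge_cases[OF e(4) z(1)] z(2) by linarith+
    have "d v u' \<le> d v u + d u u'" using gdist_triangle V by auto
    moreover have "d v u' \<noteq> 0" using gdist_eq_0_iff V ne by auto
    moreover have "d v u' \<noteq> 1"
    proof
      assume "d v u' = 1"
      then have "d u v \<noteq> d u u'" using gdist_edge_neq edge_if_gdist_1 V by blast
      then show False using gdist_edge e(1) edge_sym[OF e(4)] by simp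
    qed
    moreover have "d v u = 1" "d u u' = 1" using gdist_edge edge_sym e by auto
    ultimately have "d v u' = 2" by linarith
    then have "u \<in> ginterval E V v u' \<and> u \<in> ginterval E V u' z \<and> u \<in> ginterval E V v z"
      and "v' \<in> ginterval E V v u' \<and> v' \<in> ginterval E V u' z \<and> v' \<in> ginterval E V v z"
      unfolding ginterval_def using V z dz gdist_commute gdist_edge e edge_sym by auto
    then have "u = v'" using median_unique[OF V(2) V(3) z(1)] by blast
    with ne show False by simp
  qed
qed

lemma W_eq_opposite_edge:
  assumes "E u v" "E v v'" "E v' u'" "E u' u" and "u \<noteq> v'" "v \<noteq> u'"
  shows "W u v = W u' v'"
  using W_subset_opposite_edge assms W_subset_opposite_edge[of u' v' v u] edge_sym
  by (metis subset_antisym)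

lemma gdist_across_edges:
  assumes e: "E u v" "E x x'" and x: "x \<in> W u v" and x': "x' \<in> W v u"
  shows "d x v = d x u + 1" and "d x' u = d x u + 1" and "d x' v = d x u"
proof -
  have V: "u \<in> V" "v \<in> V" "x \<in> V" "x' \<in> V" using edge_in_V e by auto
  have "d x v \<le> d x x' + d x' v" "d x' u \<le> d x' x + d x u" using gdist_triangle V by auto
  moreover have "d x x' = 1" "d x' x = 1" using gdist_edge e edge_sym by auto
  moreover have "d x v = d x u + 1" "d x' u = d x' v + 1"
    using gdist_edge_cases[OF e(1) V(3)] gdist_edge_cases[OF e(1) V(4)] x x' unfolding W_def by auto
  ultimately show "d x v = d x u + 1" "d x' u = d x u + 1" "d x' v = d x u" by linarith+
qed

text \<open>The inductive step of the Djokovic-Winkler argument: move the edge \<open>uv\<close> one step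
  towards the edge \<open>xx'\<close> across a square, taking \<open>v'\<close> to be the median of \<open>u', v, x'\<close>.\<close>
lemma square_towards_edge:
  assumes e: "E u v" "E x x'" and x: "x \<in> W u v" and x': "x' \<in> W v u" and "x \<noteq> u"
  obtains u' v' where "E u u'" "E u' v'" "E v' v" "u \<noteq> v'" "v \<noteq> u'" "d x u' < d x u"
    "x \<in> W u' v'" "x' \<in> W v' u'"
proof -
  have V: "u \<in> V" "v \<in> V" "x \<in> V" "x' \<in> V" using edge_in_V e by auto
  note across = gdist_across_edges[OF e x x']
  define k where "k = d x u"
  have "k > 0" using \<open>x \<noteq> u\<close> gdist_eq_0_iff V unfolding k_def by auto
  obtain u' where u': "E u u'" "d u' x + 1 = d u x" using gdist_step V \<open>x \<noteq> u\<close> by metis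
  have Vu': "u' \<in> V" using edge_in_V u' by auto
  have du'x: "d x u' = k - 1" using u' gdist_commute V Vu' unfolding k_def by auto
  have "d x v \<le> d x u' + d u' v" "d u' v \<le> d u' u + d u v" using gdist_triangle V Vu' by auto
  then have du'v: "d u' v = 2"
    using across du'x gdist_edge u'(1) edge_sym e(1) \<open>k > 0\<close> unfolding k_def by fastforce
  have "d x' u \<le> d x' u' + d u' u" "d x' u' \<le> d x' x + d x u'" using gdist_triangle V Vu' by auto
  then have du'x': "d u' x' = k"
    using gdist_commute[OF Vu' V(4)] across du'x gdist_edge u'(1) edge_sym e(2) \<open>k > 0\<close>
    unfolding k_def by fastforce
  obtain v' where v': "v' \<in> ginterval E V u' v" "v' \<in> ginterval E V v x'" "v' \<in> ginterval E V u' x'"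
    using median_unique[OF Vu' V(2) V(4)] by blast
  have Vv': "v' \<in> V" using v' unfolding ginterval_def by auto
  have "d u' v' + d v' v = 2" "d v' v + d v' x' = k" "d u' v' + d v' x' = k"
    using v' du'v du'x' gdist_commute[OF V(2) V(4)] gdist_commute[OF V(2) Vv'] across
    unfolding ginterval_def k_def by auto
  then have dv': "d u' v' = 1" "d v' v = 1" "d v' x' = k - 1" by linarith+
  have "d x v \<le> d x v' + d v' v" using gdist_triangle V Vv' by auto
  then have "x \<in> W u' v'" using du'x across dv' \<open>k > 0\<close> V unfolding W_def k_def by auto
  moreover have "x' \<in> W v' u'"
    using dv' du'x' gdist_commute V Vu' Vv' \<open>k > 0\<close> unfolding W_def by auto
  moreover have "u \<noteq> v'" using dv' across gdist_commute V Vv' unfolding k_def by fastforce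
  moreover have "v \<noteq> u'" using du'v by auto
  moreover have "E u' v'" "E v' v" using edge_if_gdist_1 dv' V Vu' Vv' by auto
  moreover have "d x u' < d x u" using du'x \<open>k > 0\<close> unfolding k_def by auto
  ultimately show thesis using that u'(1) by blast
qed

lemma W_eq_if_crossing_edge:
  assumes "E u v" "E x x'" "x \<in> W u v" "x' \<in> W v u"
  shows "W x x' = W u v"
  using assms
proof (induction "d x u" arbitrary: u v rule: less_induct)
  case less
  show ?case
  proof (cases "x = u")
    case True
    then have "x' = v"
      using gdist_across_edges[OF less.prems] gdist_eq_0_iff edge_in_V less.prems(1,2) by auto
    with True show ?thesis by simp
  next
    case False
    obtain u' v' where uv': "E u u'" "E u' v'" "E v' v" "u \<noteq> v'" "v \<noteq> u'" "d x u' < d x u"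
      "x \<in> W u' v'" "x' \<in> W v' u'"
      using square_towards_edge[OF less.prems False] by blast
    have "W x x' = W u' v'" using less.hyps[OF uv'(6) uv'(2) less.prems(2) uv'(7,8)] .
    also have "\<dots> = W u v"
      using W_eq_opposite_edge[OF less.prems(1) edge_sym[OF uv'(3)] edge_sym[OF uv'(2)]
          edge_sym[OF uv'(1)] uv'(4,5)] by simp
    finally show ?thesis .
  qed
qed

lemma mem_W_if_closer_neighbour:
  assumes e: "E u v" "E x x'" and "x \<in> W u v" "y \<in> W u v" and closer: "d x' y < d x y"
  shows "x' \<in> W u v"
proof (rule ccontr)
  assume "x' \<notin> W u v"
  have V: "x \<in> V" "x' \<in> V" "y \<in> V" using assms W_subset_V edge_in_V by auto
  then have "x' \<in> W v u" using Diff_W[OF e(1)] \<open>x' \<notin> W u v\<close> by blast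
  then have "W x x' = W u v" using W_eq_if_crossing_edge e \<open>x \<in> W u v\<close> by blast
  then have "d y x < d y x'" using \<open>y \<in> W u v\<close> unfolding W_def by auto
  with closer show False using gdist_commute[OF V(3) V(1)] gdist_commute[OF V(3) V(2)] by linarith
qed

lemma W_convex:
  assumes e: "E u v" and "x \<in> W u v" "y \<in> W u v" "m \<in> ginterval E V x y"
  shows "m \<in> W u v"
  using assms(2,4)
proof (induction "d x m" arbitrary: x)
  case 0
  have "x \<in> V" "m \<in> V" using 0 W_subset_V unfolding ginterval_def by auto
  then have "x = m" using gdist_eq_0_iff[of x m] 0 by simp
  then show ?case using 0 by simp
next
  case (Suc k)
  have V: "x \<in> V" "y \<in> V" "m \<in> V" using Suc.prems \<open>y \<in> W u v\<close> W_subset_V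
    unfolding ginterval_def by auto
  have "x \<noteq> m" using Suc.hyps(2) by auto
  then obtain x' where x': "E x x'" "d x' m + 1 = d x m" using gdist_step[OF V(1) V(3)] by blast
  have Vx': "x' \<in> V" using edge_in_V x' by auto
  have "d x' y \<le> d x' m + d m y" "d x y \<le> d x x' + d x' y"
    using gdist_triangle[OF Vx' V(3) V(2)] gdist_triangle[OF V(1) Vx' V(2)] .
  moreover have "d x m + d m y = d x y" using Suc.prems(2) unfolding ginterval_def by simp
  ultimately have closer: "d x' y + 1 = d x y" using x'(2) gdist_edge[OF x'(1)] by linarith
  then have "x' \<in> W u v" using mem_W_if_closer_neighbour[OF e x'(1) Suc.prems(1) \<open>y \<in> W u v\<close>] by simp
  moreover have "m \<in> ginterval E V x' y"
    using Suc.prems(2) x'(2) closer Vx' unfolding ginterval_def by auto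
  moreover have "k = d x' m" using Suc.hyps(2) x'(2) by simp
  ultimately show ?case using Suc.hyps(1) by blast
qed

lemma halfspace_subset_V: "h \<in> halfspaces V E \<Longrightarrow> h \<subseteq> V"
  unfolding halfspaces_eq_W using W_subset_V by blast

lemma Diff_halfspace: "h \<in> halfspaces V E \<Longrightarrow> V - h \<in> halfspaces V E"
  unfolding halfspaces_eq_W using Diff_W edge_sym by blast

lemma halfspace_nonempty: "h \<in> halfspaces V E \<Longrightarrow> h \<noteq> {}"
  unfolding halfspaces_eq_W W_def using edge_in_V gdist_edge by fastforce

lemma halfspace_convex:
  "h \<in> halfspaces V E \<Longrightarrow> x \<in> h \<Longrightarrow> y \<in> h \<Longrightarrow> m \<in> ginterval E V x y \<Longrightarrow> m \<in> h"
  unfolding halfspaces_eq_W using W_convex by blast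

lemma halfspace_separates:
  assumes "x \<in> V" "y \<in> V" "x \<noteq> y"
  obtains h where "h \<in> halfspaces V E" "x \<in> h" "y \<notin> h"
proof -
  obtain x' where x': "E x x'" "d x' y + 1 = d x y" using gdist_step assms by blast
  then have "x \<in> W x x'" "y \<notin> W x x'"
    using assms gdist_edge gdist_commute edge_in_V unfolding W_def by auto
  with x'(1) show thesis using that unfolding halfspaces_eq_W by blast
qed

text \<open>For \<open>y \<in> a - h\<close>, the median of \<open>p, q, y\<close> lies in \<open>a\<close> and on a geodesic from \<open>p\<close> to
  \<open>q\<close>, so by minimality it is \<open>p\<close>; but it also lies between \<open>q\<close> and \<open>y\<close>, hence in the convex set
  \<open>V - h\<close>.\<close>
lemma subset_if_halfspace_separates_gate:
  assumes a: "a \<in> halfspaces V E" and p: "p \<in> a" and q: "q \<in> V"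
    and closest: "\<And>y. y \<in> a \<Longrightarrow> d p q \<le> d y q"
    and h: "h \<in> halfspaces V E" "p \<in> h" "q \<notin> h"
  shows "a \<subseteq> h"
proof
  fix y assume y: "y \<in> a"
  show "y \<in> h"
  proof (rule ccontr)
    assume "y \<notin> h"
    have V: "p \<in> V" "y \<in> V" using halfspace_subset_V a p y by blast+
    obtain m where m: "m \<in> ginterval E V p q" "m \<in> ginterval E V q y" "m \<in> ginterval E V p y"
      using median_unique[OF V(1) q V(2)] by blast
    have "m \<in> V - h"
      using halfspace_convex[OF Diff_halfspace[OF h(1)] _ _ m(2)] V q h(3) \<open>y \<notin> h\<close> by blast
    then have "d p m \<noteq> 0" using gdist_eq_0_iff V m(1) h(2) unfolding ginterval_def by blast
    moreover have "d p m + d m q = d p q" using m(1) unfolding ginterval_def by blast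
    moreover have "d p q \<le> d m q" using closest halfspace_convex[OF a p y m(3)] .
    ultimately show False by linarith
  qed
qed

lemma halfspace_separates_hinterval_iff:
  assumes "h \<in> halfspaces V E" "x \<in> V" "y \<in> V"
  shows "(\<exists>p\<in>hinterval V E x y. \<exists>q\<in>hinterval V E x y. p \<in> h \<and> q \<in> V - h) \<longleftrightarrow> (x \<in> h \<longleftrightarrow> y \<notin> h)"
proof -
  have "x \<in> hinterval V E x y" "y \<in> hinterval V E x y"
    using assms unfolding hinterval_def Uhs_def by auto
  moreover have "m \<in> k" if "m \<in> hinterval V E x y" "k \<in> halfspaces V E" "x \<in> k" "y \<in> k" for m k
    using that unfolding hinterval_def Uhs_def by blast
  ultimately show ?thesis using assms Diff_halfspace[OF assms(1)] by blast
qed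

end

locale closest_pair = median +
  fixes h1 h2 :: "'a set" and x1 x2 :: 'a
  assumes h1: "h1 \<in> halfspaces V E" and h2: "h2 \<in> halfspaces V E"
    and disjoint: "h1 \<inter> h2 = {}"
    and x1: "x1 \<in> h1" and x2: "x2 \<in> h2"
    and closest: "\<And>a b. a \<in> h1 \<Longrightarrow> b \<in> h2 \<Longrightarrow> d x1 x2 \<le> d a b"

text \<open>Lemmas proved below become
  available for the swapped instance, as \<open>swap.\<dots>\<close>, only after the context is re-entered.\<close>
sublocale closest_pair \<subseteq> swap: closest_pair V E h2 h1 x2 x1
proof
  fix a b assume ab: "a \<in> h2" "b \<in> h1"
  then have "a \<in> V" "b \<in> V" "x1 \<in> V" "x2 \<in> V" using halfspace_subset_V h1 h2 x1 x2 by auto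
  then show "d x2 x1 \<le> d a b"
    using closest[OF ab(2) ab(1)] gdist_commute[of x1 x2] gdist_commute[of a b] by simp
qed (use h1 h2 disjoint x1 x2 in auto)

context closest_pair
begin

lemma x1_in_V: "x1 \<in> V" and x2_in_V: "x2 \<in> V"
  using halfspace_subset_V h1 h2 x1 x2 by auto

lemma nested_if_separates:
  assumes h: "h \<in> halfspaces V E" "x1 \<in> h" "x2 \<notin> h"
  shows "h1 \<subseteq> h \<and> h \<subseteq> V - h2"
proof -
  have "h1 \<subseteq> h"
    using subset_if_halfspace_separates_gate[OF h1 x1 x2_in_V _ h] closest x2 by blast
  moreover have "h2 \<subseteq> V - h"
    using subset_if_halfspace_separates_gate[OF h2 x2 x1_in_V _ Diff_halfspace[OF h(1)]]
      swap.closest x1 h x1_in_V x2_in_V by blast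
  ultimately show ?thesis using halfspace_subset_V[OF h(1)] by blast
qed

end

context closest_pair
begin

lemma x1_mem_if_hatsub:
  assumes h: "h \<in> halfspaces V E" and "hatsub V h1 h"
  shows "x1 \<in> h"
proof (rule ccontr)
  assume "x1 \<notin> h"
  with \<open>hatsub V h1 h\<close> x1 have "V - h1 \<subset> h" unfolding hatsub_def by blast
  then have "x2 \<in> h" using x2 x2_in_V disjoint by blast
  then have "h \<subseteq> V - h1" using swap.nested_if_separates h \<open>x1 \<notin> h\<close> by blast
  with \<open>V - h1 \<subset> h\<close> show False by blast
qed

lemma mem_if_hatsub_transverse:
  assumes "h \<in> halfspaces V E" "hatsub V h1 h" "transverse V h h2"
  shows "x1 \<in> h \<and> x2 \<in> h"
  using assms x1_mem_if_hatsub nested_if_separates unfolding transverse_def by blast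

text \<open>A point \<open>y \<noteq> x\<^sub>1\<close> of \<open>h\<^sub>1\<close> is cut off from \<open>x\<^sub>1\<close> by some half-space \<open>k\<close>; if \<open>k\<close> contains
  \<open>x\<^sub>2\<close> it is disjoint from \<open>h\<^sub>1\<close>, and otherwise its complement contains \<open>x\<^sub>1, x\<^sub>2\<close> but not \<open>y\<close>.\<close>
lemma h1_inter_hinterval: "h1 \<inter> hinterval V E x1 x2 = {x1}"
proof -
  have "y = x1" if y: "y \<in> h1" "y \<in> hinterval V E x1 x2" for y
  proof (rule ccontr)
    assume "y \<noteq> x1"
    moreover have "y \<in> V" using y unfolding hinterval_def by blast
    ultimately obtain k where k: "k \<in> halfspaces V E" "y \<in> k" "x1 \<notin> k"
      using halfspace_separates x1_in_V by metis
    show False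
    proof (cases "x2 \<in> k")
      case True
      then show False using swap.nested_if_separates k y by blast
    next
      case False
      then show False
        using y(2) Diff_halfspace[OF k(1)] k x1_in_V x2_in_V unfolding hinterval_def Uhs_def by blast
    qed
  qed
  moreover have "x1 \<in> hinterval V E x1 x2" using x1_in_V unfolding hinterval_def Uhs_def by blast
  ultimately show ?thesis using x1 by blast
qed

lemma separates_x1_x2_iff:
  assumes "h \<in> halfspaces V E"
  shows "(x1 \<in> h \<longleftrightarrow> x2 \<notin> h) \<longleftrightarrow>
    (h1 \<subseteq> h \<and> h \<subseteq> V - h2) \<or> (h1 \<subseteq> V - h \<and> V - h \<subseteq> V - h2)"
  using nested_if_separates[OF assms] swap.nested_if_separates[OF assms]
    halfspace_subset_V assms h1 h2 x1 x2 by blast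

end

context closest_pair
begin

lemma h2_inter_hinterval: "h2 \<inter> hinterval V E x1 x2 = {x2}"
  using swap.h1_inter_hinterval unfolding hinterval_commute[of V E x1 x2] .

lemma mem_if_bridge_set:
  assumes "h \<in> bridge_set V E h1 h2"
  shows "x1 \<in> h \<and> x2 \<in> h"
proof -
  have h: "h \<in> halfspaces V E" using assms unfolding bridge_set_def by blast
  from assms consider "hatsub V h1 h" "transverse V h h2" | "hatsub V h2 h" "transverse V h h1"
    | "hatsub V h1 h" "hatsub V h2 h"
    unfolding bridge_set_def by blast
  then show ?thesis
    using mem_if_hatsub_transverse[OF h] swap.mem_if_hatsub_transverse[OF h]
      x1_mem_if_hatsub[OF h] swap.x1_mem_if_hatsub[OF h]
    by cases auto
qed

lemma bridge_set_if_mem: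
  assumes ss: "strongly_separated V E h1 h2"
    and h: "h \<in> halfspaces V E" "x1 \<in> h" "x2 \<in> h"
  shows "h \<in> bridge_set V E h1 h2"
proof -
  have "x2 \<in> V - h1" "x1 \<in> V - h2" using x1 x2 x1_in_V x2_in_V disjoint by auto
  then have "hatsub V h1 h \<or> transverse V h h1" "hatsub V h2 h \<or> transverse V h h2"
    using hatsub_or_transverse[OF halfspace_subset_V[OF h(1)]] halfspace_subset_V[OF h1]
      halfspace_subset_V[OF h2] h(2,3) x1 x2 by blast+
  moreover have "\<not> (transverse V h h1 \<and> transverse V h h2)"
    using ss h(1) unfolding strongly_separated_def by blast
  ultimately show ?thesis using h(1) unfolding bridge_set_def by blast
qed

lemma bridge_eq_hinterval:
  assumes "strongly_separated V E h1 h2"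
  shows "bridge V E h1 h2 = hinterval V E x1 x2"
proof
  show "bridge V E h1 h2 \<subseteq> hinterval V E x1 x2"
    unfolding bridge_def hinterval_def Uhs_def using bridge_set_if_mem[OF assms] by blast
  show "hinterval V E x1 x2 \<subseteq> bridge V E h1 h2"
    unfolding bridge_def hinterval_def Uhs_def using mem_if_bridge_set bridge_set_subset by blast
qed

lemma halfspaces_separating_hinterval:
  "{h \<in> halfspaces V E. \<exists>p\<in>hinterval V E x1 x2. \<exists>q\<in>hinterval V E x1 x2. p \<in> h \<and> q \<in> V - h}
    = {h \<in> halfspaces V E. (h1 \<subseteq> h \<and> h \<subseteq> V - h2) \<or> (h1 \<subseteq> V - h \<and> V - h \<subseteq> V - h2)}"
proof -
  have "(\<exists>p\<in>hinterval V E x1 x2. \<exists>q\<in>hinterval V E x1 x2. p \<in> h \<and> q \<in> V - h) \<longleftrightarrow>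
      (h1 \<subseteq> h \<and> h \<subseteq> V - h2) \<or> (h1 \<subseteq> V - h \<and> V - h \<subseteq> V - h2)"
    if "h \<in> halfspaces V E" for h
    using halfspace_separates_hinterval_iff[OF that x1_in_V x2_in_V] separates_x1_x2_iff[OF that]
    by (rule trans)
  then show ?thesis by blast
qed

end

theorem corollary3:
  fixes V :: "'a set" and E :: "'a \<Rightarrow> 'a \<Rightarrow> bool" and h1 h2 :: "'a set"
  assumes "median_graph V E" and "finite_dim V E"
    and "h1 \<in> halfspaces V E" and "h2 \<in> halfspaces V E"
    and "h1 \<subset> V - h2"
    and "strongly_separated V E h1 h2"
  shows "\<exists>x1 x2. h1 \<inter> bridge V E h1 h2 = {x1} \<and> h2 \<inter> bridge V E h1 h2 = {x2} \<and>
           bridge V E h1 h2 = hinterval V E x1 x2 \<and>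
           {h \<in> halfspaces V E. \<exists>p\<in>bridge V E h1 h2. \<exists>q\<in>bridge V E h1 h2. p \<in> h \<and> q \<in> V - h}
           = {h \<in> halfspaces V E. (h1 \<subseteq> h \<and> h \<subseteq> V - h2) \<or> (h1 \<subseteq> V - h \<and> V - h \<subseteq> V - h2)}"
proof -
  interpret median V E using assms(1) by (rule median.intro)
  obtain x1 x2 where "x1 \<in> h1" "x2 \<in> h2" "\<And>a b. a \<in> h1 \<Longrightarrow> b \<in> h2 \<Longrightarrow> d x1 x2 \<le> d a b"
    using obtain_closest_pair[OF halfspace_nonempty[OF assms(3)] halfspace_nonempty[OF assms(4)],
        where f = d] by blast
  then interpret closest_pair V E h1 h2 x1 x2
    using assms(3-5) by unfold_locales blast+
  have "bridge V E h1 h2 = hinterval V E x1 x2"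
    using bridge_eq_hinterval assms(6) .
  then show ?thesis
    using h1_inter_hinterval h2_inter_hinterval halfspaces_separating_hinterval
    by (intro exI[of _ x1] exI[of _ x2]) simp
qed

end
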